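(* Let $k$ be a positive integer and let $c:\mathbb{Q}^{\beth_\omega}\to\{1,\dots,k\}$ be an arbitrary $k$-colouring. Let $\Pi$ be a finite set of patterns. Then there is a subset $A\subset B$ with $|A|=\aleph_1$ such that for each $\pi\in\Pi$ the set $$\{x\in\mathbb{Q}^{\beth_\omega}: x \text{ lies in the linear span of } A \text{ and has pattern } \pi\}$$ is monochromatic under $c$.
   Context: $\beth_\omega=\sup\{\aleph_0,2^{\aleph_0},2^{2^{\aleph_0}},\dots\}$. For a cardinal $\kappa$, $\mathbb{Q}^\kappa$ denotes the rational vector space of dimension $\kappa$, i.e. the direct sum (not product) of $\kappa$ copies of $\mathbb{Q}$, equipped with a basis $B=\{e_\alpha\}$ indexed by (and well-ordered by) the ordinals less than the least ordinal of cardinality $\kappa$. Every nonzero $x\in\mathbb{Q}^\kappa$ can be written uniquely as $x=\sum_{i=1}^n x_i e_{\alpha_i}$ with $n\ge1$, each $x_i$ a nonzero rational, and $\alpha_1<\alpha_2<\dots<\alpha_n$; the finite sequence $(x_1,x_2,\dots,x_n)$ is called the pattern of $x$, and $n$ is its length. A pattern is any finite nonempty sequence of nonzero rationals. *)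

theory Defs
  imports Main "HOL.Modules" "HOL-Library.Function_Algebras" "HOL-Library.Countable_Set"
begin

unbundle cardinal_syntax

fun is_beth :: "nat \<Rightarrow> 'a set \<Rightarrow> bool" where
  "is_beth 0 X = ( |X| =o |UNIV :: nat set| )"
| "is_beth (Suc n) X = (\<exists>Y :: 'a set. is_beth n Y \<and> |X| =o |Pow Y| )"

text \<open>The set I has cardinality beth_omega = sup of all beth_n:
  it is an upper bound of all beth_n, and it is below every upper bound
  (upper bounds are compared among subsets of I, which suffices since
  cardinals are linearly ordered).\<close>
definition has_card_beth_omega :: "'a set \<Rightarrow> bool" where
  "has_card_beth_omega I \<longleftrightarrow>
     (\<forall>n. \<exists>X \<subseteq> I. is_beth n X) \<and>
     (\<forall>J \<subseteq> I. (\<forall>n. \<exists>X :: 'a set. is_beth n X \<and> |X| \<le>o |J| ) \<longrightarrow> |I| \<le>o |J| )"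

definition has_card_aleph1 :: "'a set \<Rightarrow> bool" where
  "has_card_aleph1 S \<longleftrightarrow> uncountable S \<and>
     (\<forall>T :: 'a set. uncountable T \<longrightarrow> |S| \<le>o |T| )"

text \<open>Q^kappa as finitely supported functions from the index type to rat;
  scalar multiplication and standard basis vectors.\<close>
definition qscale :: "rat \<Rightarrow> ('i \<Rightarrow> rat) \<Rightarrow> ('i \<Rightarrow> rat)" where
  "qscale a x = (\<lambda>i. a * x i)"

definition basis_vec :: "'i \<Rightarrow> ('i \<Rightarrow> rat)" where
  "basis_vec \<alpha> = (\<lambda>i. if i = \<alpha> then 1 else 0)"

definition qvectors :: "('i \<Rightarrow> rat) set" where
  "qvectors = {x. finite {i. x i \<noteq> 0}}"

definition is_pattern :: "rat list \<Rightarrow> bool" where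
  "is_pattern \<pi> \<longleftrightarrow> \<pi> \<noteq> [] \<and> 0 \<notin> set \<pi>"

definition has_pattern :: "'i rel \<Rightarrow> ('i \<Rightarrow> rat) \<Rightarrow> rat list \<Rightarrow> bool" where
  "has_pattern r x \<pi> \<longleftrightarrow> x \<noteq> 0 \<and>
     (\<exists>as. sorted_wrt (\<lambda>a b. (a, b) \<in> r \<and> a \<noteq> b) as \<and>
           set as = {i. x i \<noteq> 0} \<and> \<pi> = map x as)"

end

theory Submission
  imports Defs "HOL-Library.Countable_Set_Type"
begin

text \<open>Let N be the largest length of a pattern in \<open>\<Pi>\<close>. Colour every N-element set t of indices
  by the tuple of colours of the vectors obtained by writing each \<open>\<pi> \<in> \<Pi>\<close> onto the first
  \<open>|\<pi>|\<close> elements of t; there are finitely many such colours. As the index set has at least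
  \<open>\<beth>\<^sub>3\<^sub>N\<^sub>+\<^sub>1\<close> elements, the Erd\H{o}s--Rado theorem yields an uncountable homogeneous set H.
  Throwing away the finitely many elements of H with fewer than N larger elements in H, every
  vector in the span of the remaining basis vectors with pattern \<open>\<pi>\<close> is the vector written
  onto some N-subset of H, so its colour only depends on \<open>\<pi>\<close>.

  Erd\H{o}s--Rado is proved with the canonical end-homogeneous tree of a colouring f of the
  (m+1)-sets of X: y lies below x iff y < x and f agrees on \<open>{y} \<union> s\<close> and \<open>{x} \<union> s\<close> for all
  m-sets s of nodes below y. If every node had fewer than \<open>|Y|\<close> predecessors, the nodes could
  be labelled in Y so that labels are injective along branches, and the labelled branch below x
  together with the colours on it would determine x; hence \<open>|X| \<le> 2\<^bsup>2\<^bsup>|Y|\<^esup>\<^esup>\<close>. So if X is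
  larger, some node has at least \<open>|Y|\<close> predecessors, on which f is end-homogeneous, and
  induction on m applies to the colouring \<open>s \<mapsto> f ({x} \<union> s)\<close> of m-sets.\<close>

lemma card_of_Pow_mono: "|A| \<le>o |B| \<Longrightarrow> |Pow A| \<le>o |Pow B|"
proof -
  assume "|A| \<le>o |B|"
  then obtain g where g: "inj_on g A" "g ` A \<subseteq> B" using card_of_ordLeq[of A B] by blast
  have "inj_on (image g) (Pow A)"
    using g(1) by (metis PowD inj_onI inj_on_image_eq_iff)
  moreover have "image g ` Pow A \<subseteq> Pow B" using g(2) by auto
  ultimately show ?thesis using card_of_ordLeq by blast
qed

lemma card_of_Pow_cong: "|A| =o |B| \<Longrightarrow> |Pow A| =o |Pow B|"
  by (metis card_of_Pow_mono ordIso_iff_ordLeq)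

lemma card_of_code_space:
  fixes Y :: "'j set" and C :: "'c set"
  assumes "infinite Y" "finite C"
  shows "|Pow (Y \<times> Pow Y \<times> Pow Y \<times> insert None (Some ` C))| \<le>o |Pow (Pow Y)|"
proof -
  have inf: "\<not> finite (Field |Pow Y| )" using assms(1) by (simp add: Field_card_of)
  have Y: "|Y| \<le>o |Pow Y|" by (rule ordLess_imp_ordLeq[OF card_of_Pow])
  have PY: "|Pow Y| \<le>o |Pow Y|" by (rule ordLeq_refl[OF card_of_Card_order])
  have "countable (insert None (Some ` C))" using assms(2) by (simp add: countable_finite)
  then have "|insert None (Some ` C)| \<le>o |UNIV :: nat set|" by (rule countable_card_of_nat[THEN iffD1])
  also have "|UNIV :: nat set| \<le>o |Pow Y|"
    using assms(1) by (simp add: infinite_iff_card_of_nat[THEN iffD1])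
  finally have C: "|insert None (Some ` C)| \<le>o |Pow Y|" .
  note times = card_of_Times_ordLeq_infinite_Field[OF inf _ _ card_of_Card_order]
  have "|Y \<times> Pow Y \<times> Pow Y \<times> insert None (Some ` C)| \<le>o |Pow Y|"
    by (rule times[OF Y times[OF PY times[OF PY C]]])
  then show ?thesis by (rule card_of_Pow_mono)
qed

lemma is_beth_infinite:
  fixes Y :: "'a set"
  shows "is_beth n Y \<Longrightarrow> infinite Y"
proof (induction n arbitrary: Y)
  case 0
  then show ?case using card_of_ordIso_finite by fastforce
next
  case (Suc n)
  then obtain Z :: "'a set" where "is_beth n Z" "|Y| =o |Pow Z|" by auto
  then show ?case using Suc.IH card_of_ordIso_finite by fastforce
qed

lemma is_beth_Suc_uncountable:
  fixes Y :: "'a set"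
  assumes "is_beth (Suc n) Y" "|Y| \<le>o |X|"
  shows "uncountable X"
proof
  assume "countable X"
  obtain Z :: "'a set" where Z: "is_beth n Z" "|Y| =o |Pow Z|" using assms(1) by auto
  have "|UNIV :: nat set| \<le>o |Z|"
    using is_beth_infinite[OF Z(1)] infinite_iff_card_of_nat by blast
  also have "|Z| <o |Pow Z|" by (rule card_of_Pow)
  also have "|Pow Z| =o |Y|" by (rule ordIso_symmetric[OF Z(2)])
  also have "|Y| \<le>o |X|" by (rule assms(2))
  also have "|X| \<le>o |UNIV :: nat set|" using \<open>countable X\<close> countable_card_of_nat by blast
  finally show False using ordLess_irreflexive by blast
qed

lemma is_beth_Suc_Suc_Suc:
  fixes Z :: "'a set"
  assumes "is_beth (Suc (Suc (Suc n))) Z"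
  obtains Y :: "'a set" where "is_beth n Y" "|Pow (Pow Y)| <o |Z|"
proof -
  obtain Z2 :: "'a set" where Z2: "is_beth (Suc (Suc n)) Z2" "|Z| =o |Pow Z2|" using assms by auto
  obtain Z1 :: "'a set" where Z1: "is_beth (Suc n) Z1" "|Z2| =o |Pow Z1|" using Z2(1) by auto
  obtain Y :: "'a set" where Y: "is_beth n Y" "|Z1| =o |Pow Y|" using Z1(1) by auto
  have "|Pow (Pow Y)| =o |Pow Z1|" by (rule card_of_Pow_cong[OF ordIso_symmetric[OF Y(2)]])
  also have "|Pow Z1| =o |Z2|" by (rule ordIso_symmetric[OF Z1(2)])
  also have "|Z2| <o |Pow Z2|" by (rule card_of_Pow)
  also have "|Pow Z2| =o |Z|" by (rule ordIso_symmetric[OF Z2(2)])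
  finally show ?thesis using that Y(1) by blast
qed

lemma uncountable_has_aleph1_subset:
  fixes A :: "'i set"
  assumes "uncountable A"
  obtains S where "S \<subseteq> A" "has_card_aleph1 S"
proof -
  let ?K = "{ |T| | T :: 'i set. uncountable T}"
  have "|A| \<in> ?K" using assms by blast
  then obtain k where k: "k \<in> ?K" "\<And>k'. (k', k) \<in> ordLess \<Longrightarrow> k' \<notin> ?K"
    by (rule wfE_min[OF wf_ordLess]) blast
  then obtain T0 :: "'i set" where T0: "k = |T0|" "uncountable T0" by blast
  have minimal: "|T0| \<le>o |T|" if "uncountable T" for T :: "'i set"
  proof -
    have "|T| \<in> ?K" using that by blast
    then have "\<not> |T| <o |T0|" using k(2) T0(1) by blast
    then show ?thesis using not_ordLess_iff_ordLeq[OF card_of_Well_order card_of_Well_order] by blast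
  qed
  obtain g where g: "inj_on g T0" "g ` T0 \<subseteq> A"
    using minimal[OF assms] card_of_ordLeq[of T0 A] by blast
  have "uncountable (g ` T0)" using countable_image_inj_on g(1) T0(2) by blast
  moreover have "|g ` T0| \<le>o |T|" if "uncountable T" for T :: "'i set"
    using ordLeq_transitive[OF card_of_image minimal[OF that]] .
  ultimately have "has_card_aleph1 (g ` T0)" unfolding has_card_aleph1_def by blast
  then show ?thesis using that g(2) by blast
qed

text \<open>The same as \<open>nsets\<close> of HOL-Library's Ramsey theory, which cannot be imported here:
  its dependency FuncSet makes \<open>\<Pi>\<close> a binder, clashing with the variable \<open>\<Pi>\<close> of the theorem.\<close>

definition nsubsets :: "'a set \<Rightarrow> nat \<Rightarrow> 'a set set" (\<open>[_]\<^bsup>_\<^esup>\<close> [0, 999] 999) where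
  "[A]\<^bsup>n\<^esup> = {s. s \<subseteq> A \<and> finite s \<and> card s = n}"

lemma nsubsets_mono: "A \<subseteq> B \<Longrightarrow> [A]\<^bsup>n\<^esup> \<subseteq> [B]\<^bsup>n\<^esup>"
  by (auto simp: nsubsets_def)

lemma image_eq_imp_eq:
  assumes "g ` A = g ` B" "\<And>a b. a \<in> A \<Longrightarrow> b \<in> B \<Longrightarrow> g a = g b \<Longrightarrow> a = b"
  shows "A = B"
  using assms by (metis (mono_tags, lifting) imageE imageI subsetI subset_antisym)

locale well_ordered_index =
  fixes r :: "'i rel"
  assumes well_order: "well_order r"
begin

definition lt :: "'i \<Rightarrow> 'i \<Rightarrow> bool" (infix \<open>\<sqsubset>\<close> 50) where
  "a \<sqsubset> b \<longleftrightarrow> (a, b) \<in> r \<and> a \<noteq> b"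

lemma lt_irrefl [simp]: "\<not> a \<sqsubset> a"
  by (simp add: lt_def)

lemma lt_linear: "a \<noteq> b \<Longrightarrow> a \<sqsubset> b \<or> b \<sqsubset> a"
  using well_order unfolding well_order_on_def linear_order_on_def total_on_def lt_def by auto

lemma lt_trans: "a \<sqsubset> b \<Longrightarrow> b \<sqsubset> c \<Longrightarrow> a \<sqsubset> c"
  using well_order
  unfolding well_order_on_def linear_order_on_def partial_order_on_def preorder_on_def
    antisym_def trans_def lt_def
  by blast

lemma lt_asym: "a \<sqsubset> b \<Longrightarrow> \<not> b \<sqsubset> a"
  using lt_trans lt_irrefl by blast

lemma wf_lt: "wf (r - Id)"
  using well_order unfolding well_order_on_def by blast

lemma lt_iff_strict: "a \<sqsubset> b \<longleftrightarrow> (a, b) \<in> r - Id"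
  by (auto simp: lt_def)

lemma lt_induct: "(\<And>x. (\<And>y. y \<sqsubset> x \<Longrightarrow> P y) \<Longrightarrow> P x) \<Longrightarrow> P a"
  by (metis wf_lt wf_induct lt_iff_strict)

lemma sorted_wrt_lt_unique:
  "sorted_wrt (\<sqsubset>) as \<Longrightarrow> sorted_wrt (\<sqsubset>) bs \<Longrightarrow> set as = set bs \<Longrightarrow> as = bs"
proof (induction as arbitrary: bs)
  case Nil
  then show ?case by simp
next
  case (Cons a as)
  then obtain b bs' where bs: "bs = b # bs'" by (cases bs) auto
  have "a = b"
  proof (rule ccontr)
    assume "a \<noteq> b"
    then have "a \<in> set bs'" "b \<in> set as" using Cons.prems bs by auto
    then have "b \<sqsubset> a" "a \<sqsubset> b" using Cons.prems(1,2) bs by simp_all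
    then show False using lt_asym by blast
  qed
  moreover have "a \<notin> set as" "b \<notin> set bs'" using Cons.prems bs by auto
  then have "set as = set bs'" using Cons.prems(3) bs \<open>a = b\<close> by (simp add: insert_ident)
  ultimately show ?case using Cons bs by auto
qed

lemma exists_sorted_wrt_lt: "finite t \<Longrightarrow> \<exists>as. sorted_wrt (\<sqsubset>) as \<and> set as = t"
proof (induction rule: finite_induct)
  case empty
  then show ?case by simp
next
  case (insert x F)
  then obtain as where as: "sorted_wrt (\<sqsubset>) as" "set as = F" by blast
  let ?bs = "filter (\<lambda>a. a \<sqsubset> x) as @ x # filter (\<lambda>a. x \<sqsubset> a) as"
  have "sorted_wrt (\<sqsubset>) ?bs"
    using as(1) lt_trans by (simp add: sorted_wrt_append sorted_wrt_filter) blast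
  moreover have "set ?bs = insert x F"
    using as(2) insert.hyps(2) lt_linear by auto
  ultimately show ?case by blast
qed

definition sorted_list :: "'i set \<Rightarrow> 'i list" where
  "sorted_list t = (SOME as. sorted_wrt (\<sqsubset>) as \<and> set as = t)"

lemma sorted_list: "finite t \<Longrightarrow> sorted_wrt (\<sqsubset>) (sorted_list t) \<and> set (sorted_list t) = t"
  unfolding sorted_list_def by (rule someI_ex) (rule exists_sorted_wrt_lt)

lemma sorted_list_set: "sorted_wrt (\<sqsubset>) as \<Longrightarrow> sorted_list (set as) = as"
  using sorted_list[of "set as"] sorted_wrt_lt_unique by auto

lemma sorted_wrt_lt_distinct: "sorted_wrt (\<sqsubset>) as \<Longrightarrow> distinct as"
  by (induction as) auto

lemma sorted_wrt_lt_last: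
  assumes "sorted_wrt (\<sqsubset>) as" "a \<in> set as"
  shows "a = last as \<or> a \<sqsubset> last as"
  using assms
proof (induction as)
  case (Cons b bs)
  show ?case
  proof (cases "bs = []")
    case False
    then have "last bs \<in> set bs" by simp
    then show ?thesis using Cons by auto
  qed (use Cons in simp)
qed simp

lemma finite_has_greatest:
  assumes "finite t" "t \<noteq> {}"
  obtains y where "y \<in> t" "\<forall>z\<in>t - {y}. z \<sqsubset> y"
proof -
  obtain as where as: "sorted_wrt (\<sqsubset>) as" "set as = t" using exists_sorted_wrt_lt assms(1) by blast
  then have "as \<noteq> []" using assms(2) by auto
  then have "last as \<in> t" using as(2) by auto
  then show ?thesis using that as sorted_wrt_lt_last by blast
qed

lemma finite_has_least:
  assumes "finite t" "t \<noteq> {}"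
  obtains y where "y \<in> t" "\<forall>z\<in>t - {y}. y \<sqsubset> z"
proof -
  obtain as where as: "sorted_wrt (\<sqsubset>) as" "set as = t" using exists_sorted_wrt_lt assms(1) by blast
  then obtain a as' where "as = a # as'" using assms(2) by (cases as) auto
  then show ?thesis using that as by auto
qed

lemma sorted_extension_in_nsubsets:
  assumes as: "sorted_wrt (\<sqsubset>) as" "as \<noteq> []" "set as \<subseteq> H" "length as \<le> N"
    and T: "T \<in> [H]\<^bsup>N\<^esup>" "\<forall>z\<in>T. last as \<sqsubset> z"
  obtains bs where "sorted_wrt (\<sqsubset>) (as @ bs)" "set (as @ bs) \<in> [H]\<^bsup>N\<^esup>"
proof -
  obtain T' where T': "T' \<subseteq> T" "card T' = N - length as" "finite T'"
    using obtain_subset_with_card_n[of "N - length as" T] T(1) by (auto simp: nsubsets_def)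
  define bs where "bs = sorted_list T'"
  have bs: "sorted_wrt (\<sqsubset>) bs" "set bs = T'" using sorted_list[OF T'(3)] bs_def by auto
  have "a \<sqsubset> b" if "a \<in> set as" "b \<in> set bs" for a b
    using sorted_wrt_lt_last[OF as(1) that(1)] T(2) T'(1) bs(2) that(2) lt_trans by blast
  then have sorted: "sorted_wrt (\<sqsubset>) (as @ bs)"
    using as(1) bs(1) by (simp add: sorted_wrt_append)
  have "length bs = N - length as"
    using distinct_card[OF sorted_wrt_lt_distinct[OF bs(1)]] bs(2) T'(2) by simp
  then have "card (set (as @ bs)) = N"
    using distinct_card[OF sorted_wrt_lt_distinct[OF sorted]] as(4) by simp
  moreover have "set (as @ bs) \<subseteq> H" using as(3) bs(2) T'(1) T(1) by (auto simp: nsubsets_def)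
  ultimately show ?thesis using that sorted by (simp add: nsubsets_def)
qed

lemma finite_lacking_successors: "finite {h \<in> H. \<not> (\<exists>T \<in> [H]\<^bsup>N\<^esup>. \<forall>z\<in>T. h \<sqsubset> z)}"
proof (rule ccontr)
  let ?L = "{h \<in> H. \<not> (\<exists>T \<in> [H]\<^bsup>N\<^esup>. \<forall>z\<in>T. h \<sqsubset> z)}"
  assume "infinite ?L"
  then obtain F where F: "finite F" "card F = Suc N" "F \<subseteq> ?L"
    using infinite_arbitrarily_large by blast
  then have "F \<noteq> {}" by auto
  then obtain h where h: "h \<in> F" "\<forall>z\<in>F - {h}. h \<sqsubset> z" using finite_has_least F(1) by blast
  have "F - {h} \<in> [H]\<^bsup>N\<^esup>" using F h(1) by (auto simp: nsubsets_def)
  then show False using F(3) h by blast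
qed

lemma exists_labelling_avoiding:
  fixes Y :: "'j set"
  assumes below: "\<And>y. P y \<subseteq> {z. z \<sqsubset> y}" and small: "\<And>y. y \<in> X \<Longrightarrow> |P y| <o |Y|"
  obtains e where "\<forall>y\<in>X. e y \<in> Y \<and> e y \<notin> e ` P y"
proof -
  define step where "step h y = (SOME w. w \<in> Y \<and> w \<notin> h ` P y)" for h :: "'i \<Rightarrow> 'j" and y
  define e where "e = wfrec (r - Id) step"
  have "adm_wf (r - Id) step"
    unfolding adm_wf_def step_def
  proof (intro allI impI)
    fix h g :: "'i \<Rightarrow> 'j" and y
    assume "\<forall>z. (z, y) \<in> r - Id \<longrightarrow> h z = g z"
    then have "h ` P y = g ` P y" using below by (auto simp: lt_iff_strict intro!: image_cong)
    then show "(SOME w. w \<in> Y \<and> w \<notin> h ` P y) = (SOME w. w \<in> Y \<and> w \<notin> g ` P y)" by simp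
  qed
  then have e_eq: "e = step e"
    unfolding e_def by (rule wfrec_fixpoint[OF wf_lt])
  have "e y \<in> Y \<and> e y \<notin> e ` P y" if "y \<in> X" for y
  proof -
    have "\<not> Y \<subseteq> e ` P y"
    proof
      assume "Y \<subseteq> e ` P y"
      then have "|Y| \<le>o |P y|" using card_of_mono1 card_of_image ordLeq_transitive by blast
      then show False using small[OF that] not_ordLess_ordLeq by blast
    qed
    then have "\<exists>w. w \<in> Y \<and> w \<notin> e ` P y" by blast
    then have "step e y \<in> Y \<and> step e y \<notin> e ` P y" unfolding step_def by (rule someI_ex)
    with fun_cong[OF e_eq, of y] show ?thesis by simp
  qed
  then show ?thesis using that by blast
qed

end

section \<open>The end-homogeneous tree of a colouring\<close>

locale end_homogeneous_tree = well_ordered_index r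
  for r :: "'i rel" +
  fixes X :: "'i set" and f :: "'i set \<Rightarrow> 'c" and m :: nat
begin

definition tree_pred :: "'i \<Rightarrow> 'i set" where
  "tree_pred x = {y. wfrec (r - Id) (\<lambda>P y. y \<in> X \<and> y \<sqsubset> x \<and>
     (\<forall>s \<in> [{z. z \<sqsubset> y \<and> P z}]\<^bsup>m\<^esup>. f (insert y s) = f (insert x s))) y}"

lemma tree_pred_iff:
  "y \<in> tree_pred x \<longleftrightarrow> y \<in> X \<and> y \<sqsubset> x \<and>
     (\<forall>s \<in> [{z. z \<sqsubset> y \<and> z \<in> tree_pred x}]\<^bsup>m\<^esup>. f (insert y s) = f (insert x s))"
proof -
  let ?F = "\<lambda>P y. y \<in> X \<and> y \<sqsubset> x \<and>
     (\<forall>s \<in> [{z. z \<sqsubset> y \<and> P z}]\<^bsup>m\<^esup>. f (insert y s) = f (insert x s))"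
  have "adm_wf (r - Id) ?F"
    unfolding adm_wf_def
  proof (intro allI impI)
    fix P Q :: "'i \<Rightarrow> bool" and y
    assume "\<forall>z. (z, y) \<in> r - Id \<longrightarrow> P z = Q z"
    then have "{z. z \<sqsubset> y \<and> P z} = {z. z \<sqsubset> y \<and> Q z}" by (auto simp: lt_iff_strict)
    then show "?F P y = ?F Q y" by simp
  qed
  then have "wfrec (r - Id) ?F = ?F (wfrec (r - Id) ?F)"
    by (rule wfrec_fixpoint[OF wf_lt])
  then have "wfrec (r - Id) ?F y = ?F (wfrec (r - Id) ?F) y"
    by (rule fun_cong)
  then show ?thesis unfolding tree_pred_def mem_Collect_eq .
qed

lemma tree_predD: "y \<in> tree_pred x \<Longrightarrow> y \<in> X \<and> y \<sqsubset> x"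
  using tree_pred_iff by blast

lemma tree_pred_coherent:
  assumes y: "y \<in> tree_pred x"
  shows "tree_pred y = {z \<in> tree_pred x. z \<sqsubset> y}"
proof -
  have yx: "y \<sqsubset> x" using tree_predD[OF y] by blast
  have hom_y: "\<forall>s \<in> [{w. w \<sqsubset> y \<and> w \<in> tree_pred x}]\<^bsup>m\<^esup>. f (insert y s) = f (insert x s)"
    using y tree_pred_iff by blast
  have "z \<in> tree_pred y \<longleftrightarrow> z \<in> tree_pred x \<and> z \<sqsubset> y" for z
  proof (induction z rule: lt_induct)
    case (1 z)
    show ?case
    proof (cases "z \<sqsubset> y")
      case True
      have below: "{w. w \<sqsubset> z \<and> w \<in> tree_pred y} = {w. w \<sqsubset> z \<and> w \<in> tree_pred x}"
        using 1 True lt_trans by blast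
      have "[{w. w \<sqsubset> z \<and> w \<in> tree_pred x}]\<^bsup>m\<^esup> \<subseteq> [{w. w \<sqsubset> y \<and> w \<in> tree_pred x}]\<^bsup>m\<^esup>"
        using True lt_trans by (intro nsubsets_mono) blast
      then have "\<forall>s \<in> [{w. w \<sqsubset> z \<and> w \<in> tree_pred x}]\<^bsup>m\<^esup>. f (insert y s) = f (insert x s)"
        using hom_y by blast
      then show ?thesis
        using True lt_trans[OF True yx] below tree_pred_iff[of z y] tree_pred_iff[of z x] by auto
    next
      case False
      then show ?thesis using tree_pred_iff[of z y] by auto
    qed
  qed
  then show ?thesis by blast
qed

lemma tree_pred_end_homogeneous:
  assumes "y \<in> tree_pred x" "s \<in> [tree_pred x]\<^bsup>m\<^esup>" "\<forall>z\<in>s. z \<sqsubset> y"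
  shows "f (insert y s) = f (insert x s)"
proof -
  have "s \<in> [{z. z \<sqsubset> y \<and> z \<in> tree_pred x}]\<^bsup>m\<^esup>" using assms(2,3) by (auto simp: nsubsets_def)
  then show ?thesis using assms(1) tree_pred_iff by blast
qed

lemma tree_pred_eq_imp_eq:
  assumes "x \<in> X" "x' \<in> X" "tree_pred x = tree_pred x'"
    and "\<forall>s \<in> [tree_pred x]\<^bsup>m\<^esup>. f (insert x s) = f (insert x' s)"
  shows "x = x'"
proof -
  have not_lt: "\<not> x \<sqsubset> x'" if "x \<in> X" "tree_pred x = tree_pred x'"
    and hom: "\<forall>s \<in> [tree_pred x]\<^bsup>m\<^esup>. f (insert x s) = f (insert x' s)" for x x'
  proof
    assume "x \<sqsubset> x'"
    have "[{z. z \<sqsubset> x \<and> z \<in> tree_pred x'}]\<^bsup>m\<^esup> \<subseteq> [tree_pred x]\<^bsup>m\<^esup>"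
      using that(2) by (intro nsubsets_mono) blast
    then have "\<forall>s \<in> [{z. z \<sqsubset> x \<and> z \<in> tree_pred x'}]\<^bsup>m\<^esup>. f (insert x s) = f (insert x' s)"
      using hom by blast
    then have "x \<in> tree_pred x'" using tree_pred_iff[of x x'] that(1) \<open>x \<sqsubset> x'\<close> by blast
    then show False using that(2) tree_predD[of x x] by simp
  qed
  have "\<not> x \<sqsubset> x'" by (rule not_lt[OF assms(1,3,4)])
  moreover have "\<not> x' \<sqsubset> x"
  proof (rule not_lt[OF assms(2) assms(3)[symmetric]])
    show "\<forall>s \<in> [tree_pred x']\<^bsup>m\<^esup>. f (insert x' s) = f (insert x s)" using assms(3,4) by auto
  qed
  ultimately show ?thesis using lt_linear by blast
qed

lemma insert_tree_pred_nsubsets: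
  assumes "x \<in> X" "s \<in> [tree_pred x]\<^bsup>m\<^esup>"
  shows "insert x s \<in> [X]\<^bsup>Suc m\<^esup>"
proof -
  have s: "s \<subseteq> tree_pred x" "finite s" "card s = m" using assms(2) unfolding nsubsets_def by blast+
  moreover have "x \<notin> tree_pred x" "tree_pred x \<subseteq> X" using tree_predD[of x x] tree_predD by auto
  ultimately have "x \<notin> s" "s \<subseteq> X" by auto
  then show ?thesis using s assms(1) by (simp add: nsubsets_def)
qed

lemma end_homogeneous_Suc:
  assumes "H \<subseteq> tree_pred x" "\<forall>s \<in> [H]\<^bsup>m\<^esup>. f (insert x s) = c"
  shows "\<forall>t \<in> [H]\<^bsup>Suc m\<^esup>. f t = c"
proof
  fix t assume t: "t \<in> [H]\<^bsup>Suc m\<^esup>"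
  then have "finite t" "t \<noteq> {}" by (auto simp: nsubsets_def)
  then obtain y where y: "y \<in> t" "\<forall>z\<in>t - {y}. z \<sqsubset> y" by (rule finite_has_greatest)
  have s: "t - {y} \<in> [H]\<^bsup>m\<^esup>" using t y(1) by (auto simp: nsubsets_def)
  have "y \<in> tree_pred x" using y(1) t assms(1) unfolding nsubsets_def by blast
  moreover have "t - {y} \<in> [tree_pred x]\<^bsup>m\<^esup>" using s nsubsets_mono[OF assms(1)] by blast
  ultimately have "f (insert y (t - {y})) = f (insert x (t - {y}))"
    using tree_pred_end_homogeneous y(2) by blast
  moreover have "f (insert y (t - {y})) = f t" using y(1) by (simp add: insert_absorb)
  ultimately show "f t = c" using assms(2) s by simp
qed

definition branch :: "'i \<Rightarrow> 'i set" where
  "branch x = insert x (tree_pred x)"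

lemma branch_subset: "x \<in> X \<Longrightarrow> branch x \<subseteq> X"
  unfolding branch_def using tree_predD by blast

lemma tree_pred_subset_branch:
  assumes "y \<in> branch x"
  shows "tree_pred y \<subseteq> branch x"
proof (cases "y = x")
  case False
  then have "y \<in> tree_pred x" using assms unfolding branch_def by blast
  then show ?thesis unfolding branch_def tree_pred_coherent[OF \<open>y \<in> tree_pred x\<close>] by blast
qed (simp add: branch_def subset_insertI)

lemma branch_lt:
  assumes "a \<in> branch x" "b \<in> branch x" "a \<sqsubset> b"
  shows "a \<in> tree_pred b"
proof (cases "b = x")
  case True
  then show ?thesis using assms unfolding branch_def by auto
next
  case False
  then have b: "b \<in> tree_pred x" using assms(2) unfolding branch_def by blast
  then have "a \<noteq> x" using assms(3) tree_predD lt_asym by blast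
  then have "a \<in> tree_pred x" using assms(1) unfolding branch_def by blast
  then show ?thesis using assms(3) unfolding tree_pred_coherent[OF b] by blast
qed

lemma inj_on_branch:
  assumes labels: "\<forall>y\<in>X. e y \<notin> e ` tree_pred y" and x: "x \<in> X"
  shows "inj_on e (branch x)"
proof (rule inj_onI, rule ccontr)
  fix a b assume ab: "a \<in> branch x" "b \<in> branch x" "e a = e b" "a \<noteq> b"
  have X: "a \<in> X" "b \<in> X" using ab branch_subset[OF x] by blast+
  consider "a \<sqsubset> b" | "b \<sqsubset> a" using lt_linear[OF ab(4)] by blast
  then show False
  proof cases
    case 1
    then have "e a \<in> e ` tree_pred b" using branch_lt[OF ab(1,2)] by blast
    then show False using labels X(2) ab(3) by simp
  next
    case 2
    then have "e b \<in> e ` tree_pred a" using branch_lt[OF ab(2,1)] by blast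
    then show False using labels X(1) ab(3)[symmetric] by simp
  qed
qed

text \<open>The \<open>None\<close> entries record every node of the branch, also those with fewer than m
  predecessors.\<close>

definition code :: "('i \<Rightarrow> 'j) \<Rightarrow> 'i \<Rightarrow> ('j \<times> 'j set \<times> 'j set \<times> 'c option) set" where
  "code e x =
     {(e y, e ` tree_pred y, e ` s, Some (f (insert y s))) | y s.
        y \<in> branch x \<and> s \<in> [tree_pred y]\<^bsup>m\<^esup>} \<union>
     {(e y, e ` tree_pred y, {}, None) | y. y \<in> branch x}"

lemma code_eq_node:
  assumes "code e x = code e x'" "y \<in> branch x"
  obtains y' where "y' \<in> branch x'" "e y' = e y" "e ` tree_pred y' = e ` tree_pred y"
proof -
  have "(e y, e ` tree_pred y, {}, None) \<in> code e x" unfolding code_def using assms(2) by blast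
  then have "(e y, e ` tree_pred y, {}, None) \<in> code e x'" using assms(1) by simp
  then show ?thesis using that unfolding code_def by auto
qed

lemma code_eq_colour:
  assumes "code e x = code e x'" "y \<in> branch x" "s \<in> [tree_pred y]\<^bsup>m\<^esup>"
  obtains y' s' where "y' \<in> branch x'" "s' \<in> [tree_pred y']\<^bsup>m\<^esup>" "e y' = e y" "e ` s' = e ` s"
    "f (insert y' s') = f (insert y s)"
proof -
  have "(e y, e ` tree_pred y, e ` s, Some (f (insert y s))) \<in> code e x"
    unfolding code_def using assms(2,3) by blast
  then have "(e y, e ` tree_pred y, e ` s, Some (f (insert y s))) \<in> code e x'"
    using assms(1) by simp
  then show ?thesis using that unfolding code_def by auto
qed

lemma code_eq_imp_nodes_eq:
  assumes labels: "\<forall>y\<in>X. e y \<notin> e ` tree_pred y" and x: "x \<in> X" "x' \<in> X"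
    and code: "code e x = code e x'"
  shows "y \<in> branch x \<Longrightarrow> y' \<in> branch x' \<Longrightarrow> e y = e y' \<Longrightarrow> y = y'"
proof (induction y arbitrary: y' rule: lt_induct)
  case (1 y)
  txt \<open>Matching predecessors coincide by induction, so y and y' have the same predecessors and,
    read off the codes, the same colours above them.\<close>
  have inj: "inj_on e (branch x')" by (rule inj_on_branch[OF labels x(2)])
  have same_pred: "z = z'" if "z \<in> tree_pred y" "z' \<in> tree_pred y'" "e z = e z'" for z z'
    using 1 that tree_predD tree_pred_subset_branch by blast
  obtain y2 where y2: "y2 \<in> branch x'" "e y2 = e y" "e ` tree_pred y2 = e ` tree_pred y"
    using code_eq_node[OF code "1.prems"(1)] .
  have "y2 = y'" using inj_onD[OF inj] y2 "1.prems" by simp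
  then have "e ` tree_pred y = e ` tree_pred y'" using y2(3) by simp
  then have preds: "tree_pred y = tree_pred y'"
    using same_pred by (rule image_eq_imp_eq)
  have "f (insert y s) = f (insert y' s)" if s: "s \<in> [tree_pred y]\<^bsup>m\<^esup>" for s
  proof -
    obtain y3 s3 where y3: "y3 \<in> branch x'" "s3 \<in> [tree_pred y3]\<^bsup>m\<^esup>" "e y3 = e y"
      "e ` s3 = e ` s" "f (insert y3 s3) = f (insert y s)"
      using code_eq_colour[OF code "1.prems"(1) s] .
    have "y3 = y'" using inj_onD[OF inj] y3(1,3) "1.prems" by simp
    moreover have "inj_on e (tree_pred y')"
      using inj tree_pred_subset_branch[OF "1.prems"(2)] inj_on_subset by blast
    ultimately have "s3 = s" using y3(2,4) s preds by (auto simp: nsubsets_def inj_on_image_eq_iff)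
    then show ?thesis using y3(5) \<open>y3 = y'\<close> by simp
  qed
  moreover have "y \<in> X" "y' \<in> X" using "1.prems" branch_subset x by blast+
  ultimately show "y = y'" using tree_pred_eq_imp_eq preds by blast
qed

lemma inj_on_code:
  assumes labels: "\<forall>y\<in>X. e y \<notin> e ` tree_pred y"
  shows "inj_on (code e) X"
proof (rule inj_onI)
  fix x x' assume x: "x \<in> X" "x' \<in> X" and code: "code e x = code e x'"
  have sub: "branch x \<subseteq> branch x'" if xx: "x \<in> X" "x' \<in> X" "code e x = code e x'" for x x'
  proof
    fix y assume y: "y \<in> branch x"
    obtain y' where y': "y' \<in> branch x'" "e y' = e y" "e ` tree_pred y' = e ` tree_pred y"
      by (rule code_eq_node[OF xx(3) y])
    have "y = y'" using code_eq_imp_nodes_eq[OF labels xx y y'(1) y'(2)[symmetric]] .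
    then show "y \<in> branch x'" using y'(1) by simp
  qed
  have "branch x = branch x'" using sub[OF x code] sub[OF x(2,1) code[symmetric]] by (rule subset_antisym)
  then have "x \<in> branch x'" "x' \<in> branch x" unfolding branch_def by blast+
  show "x = x'"
  proof (rule ccontr)
    assume "x \<noteq> x'"
    then have "x \<in> tree_pred x'" "x' \<in> tree_pred x"
      using \<open>x \<in> branch x'\<close> \<open>x' \<in> branch x\<close> unfolding branch_def by blast+
    then show False using tree_predD[of x x'] tree_predD[of x' x] lt_asym by blast
  qed
qed

lemma card_of_le_code_space:
  assumes labels: "\<forall>y\<in>X. e y \<in> Y \<and> e y \<notin> e ` tree_pred y"
    and colours: "\<forall>t \<in> [X]\<^bsup>Suc m\<^esup>. f t \<in> C"
  shows "|X| \<le>o |Pow (Y \<times> Pow Y \<times> Pow Y \<times> insert None (Some ` C))|"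
proof -
  have "code e x \<in> Pow (Y \<times> Pow Y \<times> Pow Y \<times> insert None (Some ` C))" if x: "x \<in> X" for x
  proof -
    have "f (insert y s) \<in> C" if "y \<in> branch x" "s \<in> [tree_pred y]\<^bsup>m\<^esup>" for y s
    proof -
      have "y \<in> X" using that(1) branch_subset[OF x] by blast
      then show ?thesis using colours insert_tree_pred_nsubsets[OF _ that(2)] by blast
    qed
    moreover have "e z \<in> Y" if "z \<in> tree_pred y" for y z using labels tree_predD that by blast
    moreover have "e z \<in> Y" if "s \<in> [tree_pred y]\<^bsup>m\<^esup>" "z \<in> s" for y s z
      using that labels tree_predD unfolding nsubsets_def by blast
    moreover have "e y \<in> Y" if "y \<in> branch x" for y using labels branch_subset[OF x] that by blast
    ultimately have "code e x \<subseteq> Y \<times> Pow Y \<times> Pow Y \<times> insert None (Some ` C)"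
      unfolding code_def by auto
    then show ?thesis by simp
  qed
  moreover have "inj_on (code e) X" using labels by (intro inj_on_code) blast
  ultimately show ?thesis by (intro card_of_ordLeqI) blast+
qed

lemma exists_large_tree_pred:
  fixes Y :: "'j set"
  assumes "infinite Y" "finite C" "\<forall>t \<in> [X]\<^bsup>Suc m\<^esup>. f t \<in> C" "|Pow (Pow Y)| <o |X|"
  shows "\<exists>x\<in>X. |Y| \<le>o |tree_pred x|"
proof (rule ccontr)
  assume "\<not> ?thesis"
  then have "|tree_pred x| <o |Y|" if "x \<in> X" for x
    using that not_ordLess_iff_ordLeq[OF card_of_Well_order card_of_Well_order] by blast
  moreover have "tree_pred y \<subseteq> {z. z \<sqsubset> y}" for y using tree_predD by blast
  ultimately obtain e where "\<forall>y\<in>X. e y \<in> Y \<and> e y \<notin> e ` tree_pred y"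
    using exists_labelling_avoiding by metis
  then have "|X| \<le>o |Pow (Y \<times> Pow Y \<times> Pow Y \<times> insert None (Some ` C))|"
    using card_of_le_code_space assms(3) by blast
  also have "|Pow (Y \<times> Pow Y \<times> Pow Y \<times> insert None (Some ` C))| \<le>o |Pow (Pow Y)|"
    by (rule card_of_code_space[OF assms(1,2)])
  finally show False using assms(4) not_ordLess_ordLeq by blast
qed

end

section \<open>The Erd\H{o}s--Rado theorem\<close>

context well_ordered_index
begin

theorem erdos_rado:
  fixes f :: "'i set \<Rightarrow> 'c" and Z :: "'z set"
  assumes "finite C" "\<forall>t \<in> [X]\<^bsup>n\<^esup>. f t \<in> C" "is_beth (3 * n + 1) Z" "|Z| \<le>o |X|"
  shows "\<exists>H\<subseteq>X. uncountable H \<and> (\<exists>c. \<forall>t \<in> [H]\<^bsup>n\<^esup>. f t = c)"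
  using assms(2-4)
proof (induction n arbitrary: X f Z)
  case 0
  have "3 * 0 + 1 = Suc (0 :: nat)" by simp
  then have "is_beth (Suc 0) Z" using "0.prems"(2) by (simp only:)
  then have "uncountable X" using "0.prems"(3) by (rule is_beth_Suc_uncountable)
  moreover have "\<forall>t \<in> [X]\<^bsup>0\<^esup>. f t = f {}" by (auto simp: nsubsets_def)
  ultimately show ?case by blast
next
  case (Suc n)
  interpret T: end_homogeneous_tree r X f n
    by (simp add: end_homogeneous_tree_def well_ordered_index_axioms)
  have "3 * Suc n + 1 = Suc (Suc (Suc (3 * n + 1)))" by simp
  then have "is_beth (Suc (Suc (Suc (3 * n + 1)))) Z" using Suc.prems(2) by (simp only:)
  then obtain Y :: "'z set" where Y: "is_beth (3 * n + 1) Y" "|Pow (Pow Y)| <o |Z|"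
    by (rule is_beth_Suc_Suc_Suc)
  have "|Pow (Pow Y)| <o |X|" using Y(2) Suc.prems(3) by (rule ordLess_ordLeq_trans)
  with T.exists_large_tree_pred[OF is_beth_infinite[OF Y(1)] assms(1) Suc.prems(1)]
  obtain x where x: "x \<in> X" "|Y| \<le>o |T.tree_pred x|" by blast
  have "\<forall>s \<in> [T.tree_pred x]\<^bsup>n\<^esup>. f (insert x s) \<in> C"
    using T.insert_tree_pred_nsubsets[OF x(1)] Suc.prems(1) by blast
  from Suc.IH[OF this Y(1) x(2)]
  obtain H c where H: "H \<subseteq> T.tree_pred x" "uncountable H" "\<forall>s \<in> [H]\<^bsup>n\<^esup>. f (insert x s) = c"
    by blast
  have "\<forall>t \<in> [H]\<^bsup>Suc n\<^esup>. f t = c" using H(1,3) by (rule T.end_homogeneous_Suc)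
  moreover have "H \<subseteq> X" using H(1) T.tree_predD by blast
  ultimately show ?case using H(2) by blast
qed

end

section \<open>Vectors with a given pattern\<close>

lemma span_basis_vec_zero:
  assumes "x \<in> module.span qscale (basis_vec ` S)" "j \<notin> S"
  shows "x j = 0"
proof -
  interpret rat_fun: module qscale
    by unfold_locales (auto simp: qscale_def fun_eq_iff algebra_simps)
  have "\<forall>j. j \<notin> S \<longrightarrow> x j = 0"
    using assms(1)
  proof (induction rule: rat_fun.span_induct_alt)
    case base
    then show ?case by simp
  next
    case (step a v y)
    then obtain s where "s \<in> S" "v = basis_vec s" by blast
    then show ?case using step(2) by (auto simp: qscale_def basis_vec_def)
  qed
  then show ?thesis using assms(2) by blast
qed

context well_ordered_index
begin

lemma has_pattern_iff:
  "has_pattern r x \<pi> \<longleftrightarrow>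
     x \<noteq> 0 \<and> (\<exists>as. sorted_wrt (\<sqsubset>) as \<and> set as = {i. x i \<noteq> 0} \<and> \<pi> = map x as)"
proof -
  have "(\<lambda>a b. (a, b) \<in> r \<and> a \<noteq> b) = (\<sqsubset>)" by (auto simp: lt_def fun_eq_iff)
  then show ?thesis unfolding has_pattern_def by simp
qed

definition pattern_vec :: "rat list \<Rightarrow> 'i set \<Rightarrow> 'i \<Rightarrow> rat" where
  "pattern_vec \<pi> t j = (case map_of (zip (sorted_list t) \<pi>) j of None \<Rightarrow> 0 | Some q \<Rightarrow> q)"

lemma pattern_vec_in_qvectors: "finite t \<Longrightarrow> pattern_vec \<pi> t \<in> qvectors"
proof -
  assume "finite t"
  have "{j. pattern_vec \<pi> t j \<noteq> 0} \<subseteq> set (sorted_list t)"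
    unfolding pattern_vec_def
    by (auto split: option.splits dest: map_of_SomeD set_zip_leftD)
  then show ?thesis unfolding qvectors_def by (auto intro: finite_subset)
qed

lemma pattern_vec_sorted_prefix:
  assumes "sorted_wrt (\<sqsubset>) (as @ bs)"
  shows "pattern_vec (map x as) (set (as @ bs)) j = (if j \<in> set as then x j else 0)"
proof -
  have "zip (as @ bs) (map x as) = zip as (map x as)" by (simp add: zip_append1)
  then show ?thesis
    unfolding pattern_vec_def sorted_list_set[OF assms] by (simp add: map_of_zip_map)
qed

lemma pattern_vec_realises:
  assumes x: "x \<in> module.span qscale (basis_vec ` S)" "has_pattern r x \<pi>" "length \<pi> \<le> N"
    and S: "S \<subseteq> H" "\<forall>h\<in>S. \<exists>T \<in> [H]\<^bsup>N\<^esup>. \<forall>z\<in>T. h \<sqsubset> z"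
  shows "\<exists>t \<in> [H]\<^bsup>N\<^esup>. pattern_vec \<pi> t = x"
proof -
  obtain as where as: "sorted_wrt (\<sqsubset>) as" "set as = {i. x i \<noteq> 0}" "\<pi> = map x as"
    using x(2) has_pattern_iff by blast
  have "as \<noteq> []" using x(2) as(2) has_pattern_iff by auto
  have "set as \<subseteq> S" using as(2) span_basis_vec_zero[OF x(1)] by blast
  then obtain T where T: "T \<in> [H]\<^bsup>N\<^esup>" "\<forall>z\<in>T. last as \<sqsubset> z"
    using S \<open>as \<noteq> []\<close> by (meson last_in_set subsetD)
  have "length as \<le> N" using x(3) as(3) by simp
  moreover have "set as \<subseteq> H" using \<open>set as \<subseteq> S\<close> S(1) by blast
  ultimately obtain bs where bs: "sorted_wrt (\<sqsubset>) (as @ bs)" "set (as @ bs) \<in> [H]\<^bsup>N\<^esup>"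
    using sorted_extension_in_nsubsets[OF as(1) \<open>as \<noteq> []\<close> _ _ T] by blast
  have "pattern_vec \<pi> (set (as @ bs)) = x"
    using pattern_vec_sorted_prefix[OF bs(1)] as(2,3) by fastforce
  then show ?thesis using bs(2) by blast
qed

lemma exists_aleph1_pattern_homogeneous:
  fixes c :: "('i \<Rightarrow> rat) \<Rightarrow> nat" and \<Pi> :: "rat list set"
  assumes beth: "\<forall>n. \<exists>Z :: 'i set. is_beth n Z"
    and colours: "\<forall>x \<in> qvectors. c x \<in> {1..k}" and "finite \<Pi>"
  shows "\<exists>S :: 'i set. has_card_aleph1 S \<and>
           (\<forall>\<pi> \<in> \<Pi>. \<exists>col. \<forall>x.
              x \<in> module.span qscale (basis_vec ` S) \<and> has_pattern r x \<pi> \<longrightarrow> c x = col)"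
proof -
  define N where "N = Max (insert 0 (length ` \<Pi>))"
  define F where "F t = (\<lambda>\<pi>. if \<pi> \<in> \<Pi> then c (pattern_vec \<pi> t) else 0)" for t
  define C :: "(rat list \<Rightarrow> nat) set"
    where "C = {\<phi>. \<forall>\<pi>. (\<pi> \<in> \<Pi> \<longrightarrow> \<phi> \<pi> \<in> {0..k}) \<and> (\<pi> \<notin> \<Pi> \<longrightarrow> \<phi> \<pi> = 0)}"
  have "finite C" unfolding C_def by (rule finite_set_of_finite_funs[OF \<open>finite \<Pi>\<close>]) simp
  moreover have "\<forall>t \<in> [UNIV]\<^bsup>N\<^esup>. F t \<in> C"
    using colours pattern_vec_in_qvectors by (fastforce simp: C_def F_def nsubsets_def)
  moreover obtain Z :: "'i set" where "is_beth (3 * N + 1) Z" using beth by blast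
  ultimately obtain H L where H: "uncountable H" "\<forall>t \<in> [H]\<^bsup>N\<^esup>. F t = L"
    using erdos_rado[of C UNIV N F Z] card_of_mono1[OF subset_UNIV] by blast
  define H' where "H' = H - {h \<in> H. \<not> (\<exists>T \<in> [H]\<^bsup>N\<^esup>. \<forall>z\<in>T. h \<sqsubset> z)}"
  have "uncountable H'"
    unfolding H'_def using H(1) finite_lacking_successors uncountable_minus_countable countable_finite
    by blast
  then obtain S where S: "S \<subseteq> H'" "has_card_aleph1 S" by (rule uncountable_has_aleph1_subset)
  have "c x = L \<pi>"
    if \<pi>: "\<pi> \<in> \<Pi>" and x: "x \<in> module.span qscale (basis_vec ` S)" "has_pattern r x \<pi>" for \<pi> x
  proof -
    have "length \<pi> \<le> N" unfolding N_def using \<open>finite \<Pi>\<close> \<pi> by (simp add: Max_ge_iff)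
    moreover have "S \<subseteq> H" "\<forall>h\<in>S. \<exists>T \<in> [H]\<^bsup>N\<^esup>. \<forall>z\<in>T. h \<sqsubset> z"
      using S(1) unfolding H'_def by blast+
    ultimately obtain t where "t \<in> [H]\<^bsup>N\<^esup>" "pattern_vec \<pi> t = x"
      using pattern_vec_realises[OF x] by blast
    then show ?thesis using H(2) \<pi> unfolding F_def by force
  qed
  then show ?thesis using S(2) by blast
qed

end

theorem lemma1:
  fixes r :: "'i rel"
    and k :: nat
    and c :: "('i \<Rightarrow> rat) \<Rightarrow> nat"
    and \<Pi> :: "rat list set"
  assumes "has_card_beth_omega (UNIV :: 'i set)"
    and "card_order r"
    and "k > 0"
    and "\<forall>x \<in> qvectors. c x \<in> {1..k}"
    and "finite \<Pi>"
    and "\<forall>\<pi> \<in> \<Pi>. is_pattern \<pi>"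
  shows "\<exists>S :: 'i set. has_card_aleph1 S \<and>
           (\<forall>\<pi> \<in> \<Pi>. \<exists>col. \<forall>x.
              x \<in> module.span qscale (basis_vec ` S) \<and> has_pattern r x \<pi> \<longrightarrow> c x = col)"
proof -
  interpret well_ordered_index r
    by unfold_locales (rule card_order_on_well_order_on[OF assms(2)])
  have "\<forall>n. \<exists>Z :: 'i set. is_beth n Z"
    using assms(1) unfolding has_card_beth_omega_def by blast
  then show ?thesis using exists_aleph1_pattern_homogeneous assms(4,5) by blast
qed

end
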